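(* Let $h\in\mathbb{Z}$, $k\ge1$ and $n\ge0$. The number of partitions $\lambda\vdash n$ having an $h$-fixed hook arising from a part of size $k$ equals the number of partitions $\mu$ of $n+\binom{k}{2}-(h+1)$ such that the minimal excludant of $\mu$ is $k$ and $$h+1+\#\{\text{parts of }\mu\text{ larger than }k\}>\#\{\text{parts of }\mu\text{ smaller than }k\}.$$
   Context: A partition $\lambda=(\lambda_1\ge\cdots\ge\lambda_t>0)$ of $n$ has first-column hook lengths $h_{s,1}(\lambda)=\lambda_s+(t-s)$. An $h$-fixed hook arising from a part of size $k$ is an index $s$ with $h_{s,1}(\lambda)=s+h$ and $\lambda_s=k$. The minimal excludant (mex) of a partition is the smallest positive integer that does not occur as a part. Parts are counted with multiplicity. Partitions of negative integers do not exist (count $0$). *)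

theory Defs
  imports Main
begin

definition is_partition :: "nat list \<Rightarrow> bool" where
  "is_partition xs \<longleftrightarrow> sorted_wrt (\<ge>) xs \<and> (\<forall>p\<in>set xs. p > 0)"

definition partitions_of :: "int \<Rightarrow> nat list set" where
  "partitions_of m = {xs. is_partition xs \<and> int (sum_list xs) = m}"

text \<open>First-column hook length h_{s,1} = lambda_s + (t - s), 1-based index s.\<close>
definition hook1 :: "nat list \<Rightarrow> nat \<Rightarrow> nat" where
  "hook1 xs s = xs ! (s - 1) + (length xs - s)"

definition has_fixed_hook :: "int \<Rightarrow> nat \<Rightarrow> nat list \<Rightarrow> bool" where
  "has_fixed_hook h k xs \<longleftrightarrow>
     (\<exists>s. 1 \<le> s \<and> s \<le> length xs \<and> int (hook1 xs s) = int s + h \<and> xs ! (s - 1) = k)"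

definition mex :: "nat list \<Rightarrow> nat" where
  "mex xs = (LEAST j. 0 < j \<and> j \<notin> set xs)"

end

theory Submission
  imports Defs "HOL-Library.Multiset"
begin

text \<open>Cutting \<open>\<lambda>\<close> at the part \<open>k\<close> that carries the fixed hook writes \<open>\<lambda> = A @ k # B\<close>
  with \<open>|B| = |A| + 1 + h - k\<close>. Adding \<open>1\<close> to every part of \<open>A\<close> and deleting the first
  column of \<open>B\<close> gives partitions \<open>C\<close> (parts \<open>> k\<close>) and \<open>D\<close> (parts \<open>< k\<close>) of total size
  \<open>n - h - 1\<close> with \<open>|D| \<le> |C| + 1 + h - k\<close>; this is invertible because the deleted column has
  length \<open>|B|\<close>, which is determined by \<open>|C|\<close>. Merging \<open>C\<close>, \<open>D\<close> and one copy each of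
  \<open>1, \<dots>, k - 1\<close> then yields exactly the partitions of \<open>n + binom k 2 - h - 1\<close> with mex \<open>k\<close>,
  and the inequality on \<open>|D|\<close> becomes the stated count condition.\<close>

lemma sum_list_upt_1_eq_choose_2: "sum_list [1..<k] = k choose 2"
proof (induction k)
  case (Suc k)
  have "Suc k choose 2 = k + (k choose 2)"
    using binomial_Suc_Suc[of k 1] by (simp add: numeral_2_eq_2)
  with Suc show ?case by (cases k) auto
qed simp

lemma sorted_wrt_ge_mset_eq:
  fixes xs ys :: "'a::linorder list"
  assumes "sorted_wrt (\<ge>) xs" "sorted_wrt (\<ge>) ys" "mset xs = mset ys"
  shows "xs = ys"
proof -
  have "sort (rev ys) = rev xs"
    by (rule properties_for_sort) (use assms in \<open>simp_all add: sorted_wrt_rev\<close>)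
  moreover have "sort (rev ys) = rev ys"
    by (rule sorted_sort_id) (use assms(2) in \<open>simp add: sorted_wrt_rev\<close>)
  ultimately show ?thesis by simp
qed

lemma is_partition_append_Cons:
  "0 < k \<Longrightarrow> is_partition (A @ k # B) \<longleftrightarrow>
     is_partition A \<and> is_partition B \<and> (\<forall>a\<in>set A. k \<le> a) \<and> (\<forall>b\<in>set B. b \<le> k)"
  unfolding is_partition_def sorted_wrt_append by (auto intro: order_trans)

lemma is_partition_map_Suc: "sorted_wrt (\<ge>) A \<Longrightarrow> is_partition (map Suc A)"
  by (simp add: is_partition_def sorted_wrt_map)

lemma sorted_wrt_ge_map_pred:
  "sorted_wrt (\<ge>) (xs :: nat list) \<Longrightarrow> sorted_wrt (\<ge>) (map (\<lambda>x. x - 1) xs)"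
  by (simp add: sorted_wrt_map sorted_wrt_mono_rel[of _ "(\<ge>)"] diff_le_mono)

lemma is_partition_map_pred:
  "is_partition C \<Longrightarrow> \<forall>c\<in>set C. 1 < c \<Longrightarrow> is_partition (map (\<lambda>c. c - 1) C)"
  using sorted_wrt_ge_map_pred[of C] unfolding is_partition_def by auto

lemma sum_list_map_pred: "\<forall>c\<in>set C. 0 < c \<Longrightarrow> sum_list (map (\<lambda>c. c - 1) C) + length C = sum_list C"
  by (induction C) auto

lemma has_fixed_hook_iff_append_Cons:
  "has_fixed_hook h k lam \<longleftrightarrow>
     (\<exists>A B. lam = A @ k # B \<and> int k + int (length B) = int (length A) + 1 + h)"
proof
  assume "has_fixed_hook h k lam"
  then obtain s where s: "1 \<le> s" "s \<le> length lam" "int (hook1 lam s) = int s + h"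
    "lam ! (s - 1) = k" unfolding has_fixed_hook_def by auto
  have "lam = take (s - 1) lam @ lam ! (s - 1) # drop s lam"
    using id_take_nth_drop[of "s - 1" lam] s by simp
  with s show "\<exists>A B. lam = A @ k # B \<and> int k + int (length B) = int (length A) + 1 + h"
    unfolding hook1_def by (intro exI[of _ "take (s - 1) lam"] exI[of _ "drop s lam"]) auto
next
  assume "\<exists>A B. lam = A @ k # B \<and> int k + int (length B) = int (length A) + 1 + h"
  then obtain A B where "lam = A @ k # B" "int k + int (length B) = int (length A) + 1 + h"
    by blast
  then show "has_fixed_hook h k lam"
    unfolding has_fixed_hook_def hook1_def
    by (intro exI[of _ "Suc (length A)"]) (simp add: nth_append)
qed

lemma mex_eq_iff: "0 < k \<Longrightarrow> mex mu = k \<longleftrightarrow> k \<notin> set mu \<and> {1..<k} \<subseteq> set mu"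
proof
  assume "mex mu = k"
  have "\<exists>j. 0 < j \<and> j \<notin> set mu"
    using member_le_sum_list[of "Suc (sum_list mu)" mu]
    by (intro exI[of _ "Suc (sum_list mu)"]) auto
  then have "0 < mex mu \<and> mex mu \<notin> set mu"
    unfolding mex_def by (rule LeastI_ex)
  moreover have "j \<in> set mu" if "0 < j" "j < mex mu" for j
    using not_less_Least[of j] that unfolding mex_def by blast
  ultimately show "k \<notin> set mu \<and> {1..<k} \<subseteq> set mu"
    using \<open>mex mu = k\<close> by auto
next
  assume "0 < k" and k: "k \<notin> set mu \<and> {1..<k} \<subseteq> set mu"
  have "k \<le> j" if "0 < j" "j \<notin> set mu" for j
  proof (rule ccontr)
    assume "\<not> k \<le> j"
    with that have "j \<in> {1..<k}" by simp
    with k that show False by blast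
  qed
  with \<open>0 < k\<close> k show "mex mu = k"
    unfolding mex_def by (intro Least_equality) auto
qed

definition remove_first_column :: "nat list \<Rightarrow> nat list" where
  "remove_first_column B = filter (\<lambda>b. 0 < b) (map (\<lambda>b. b - 1) B)"

definition add_first_column :: "nat \<Rightarrow> nat list \<Rightarrow> nat list" where
  "add_first_column L D = map Suc D @ replicate (L - length D) 1"

lemma is_partition_remove_first_column:
  assumes "is_partition B"
  shows "is_partition (remove_first_column B)"
proof -
  have "sorted_wrt (\<ge>) (map (\<lambda>b. b - 1) B)"
    using assms sorted_wrt_ge_map_pred[of B] by (simp add: is_partition_def)
  then show ?thesis
    by (auto simp: is_partition_def remove_first_column_def intro: sorted_wrt_filter)
qed

lemma length_remove_first_column_le: "length (remove_first_column B) \<le> length B"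
  unfolding remove_first_column_def by (metis length_filter_le length_map)

lemma sum_list_remove_first_column:
  "is_partition B \<Longrightarrow> sum_list (remove_first_column B) + length B = sum_list B"
  unfolding is_partition_def remove_first_column_def by (induction B) auto

lemma remove_first_column_less:
  "\<forall>b\<in>set B. b \<le> k \<Longrightarrow> \<forall>d\<in>set (remove_first_column B). d < k"
  unfolding remove_first_column_def by auto

lemma is_partition_add_first_column:
  assumes "is_partition D"
  shows "is_partition (add_first_column L D)"
proof -
  have "sorted_wrt (\<ge>) (replicate m (1::nat))" for m
    by (induction m) auto
  with assms show ?thesis
    by (auto simp: is_partition_def add_first_column_def sorted_wrt_append sorted_wrt_map)
qed

lemma length_add_first_column: "length D \<le> L \<Longrightarrow> length (add_first_column L D) = L"
  by (simp add: add_first_column_def)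

lemma sum_list_add_first_column:
  "length D \<le> L \<Longrightarrow> sum_list (add_first_column L D) = sum_list D + L"
  using sum_list_Suc[of "\<lambda>d. d" D] by (simp add: add_first_column_def sum_list_replicate)

lemma add_first_column_le:
  "0 < k \<Longrightarrow> \<forall>d\<in>set D. d < k \<Longrightarrow> \<forall>b\<in>set (add_first_column L D). b \<le> k"
  unfolding add_first_column_def by auto

lemma remove_first_column_add_first_column:
  "is_partition D \<Longrightarrow> remove_first_column (add_first_column L D) = D"
  unfolding is_partition_def remove_first_column_def add_first_column_def
  by (simp add: comp_def filter_id_conv)

lemma add_first_column_remove_first_column:
  "is_partition B \<Longrightarrow> add_first_column (length B) (remove_first_column B) = B"
proof (induction B)
  case (Cons b B)
  then have "is_partition B" "0 < b" and below: "\<forall>c\<in>set B. c \<le> b"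
    by (auto simp: is_partition_def)
  show ?case
  proof (cases "b = 1")
    case True
    with below \<open>is_partition B\<close> have "\<forall>c\<in>set B. c = 1"
      by (simp add: is_partition_def le_antisym Suc_le_eq)
    then have "B = replicate (length B) 1" "remove_first_column B = []"
      by (auto simp: replicate_length_same remove_first_column_def filter_empty_conv)
    with True show ?thesis
      by (simp add: add_first_column_def remove_first_column_def)
  next
    case False
    with \<open>0 < b\<close> Cons.IH[OF \<open>is_partition B\<close>] length_remove_first_column_le[of B]
    show ?thesis
      by (auto simp: add_first_column_def remove_first_column_def Suc_diff_le)
  qed
qed (simp add: add_first_column_def remove_first_column_def)

definition hook_splits :: "int \<Rightarrow> nat \<Rightarrow> nat \<Rightarrow> (nat list \<times> nat list) set" where
  "hook_splits h k n = {(A, B). is_partition A \<and> is_partition B \<and>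
     (\<forall>a\<in>set A. k \<le> a) \<and> (\<forall>b\<in>set B. b \<le> k) \<and>
     int k + int (length B) = int (length A) + 1 + h \<and> sum_list A + k + sum_list B = n}"

definition shifted_splits :: "int \<Rightarrow> nat \<Rightarrow> nat \<Rightarrow> (nat list \<times> nat list) set" where
  "shifted_splits h k n = {(C, D). is_partition C \<and> is_partition D \<and>
     (\<forall>c\<in>set C. k < c) \<and> (\<forall>d\<in>set D. d < k) \<and>
     int k + int (length D) \<le> int (length C) + 1 + h \<and>
     int (sum_list C + sum_list D) + h + 1 = int n}"

lemma bij_betw_hook_splits:
  assumes "0 < k"
  shows "bij_betw (\<lambda>(A, B). A @ k # B) (hook_splits h k n)
           {lam \<in> partitions_of (int n). has_fixed_hook h k lam}"
proof (rule bij_betw_imageI)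
  show "inj_on (\<lambda>(A, B). A @ k # B) (hook_splits h k n)"
  proof (rule inj_onI, clarsimp simp: hook_splits_def)
    fix A B A' B'
    assume eq: "A @ k # B = A' @ k # B'"
      and "int k + int (length B) = int (length A) + 1 + h"
      and "int k + int (length B') = int (length A') + 1 + h"
    moreover from arg_cong[OF eq, of length]
    have "length A + length B = length A' + length B'"
      by simp
    ultimately have "length A = length A'"
      by linarith
    with eq show "A = A' \<and> B = B'"
      by simp
  qed
  show "(\<lambda>(A, B). A @ k # B) ` hook_splits h k n =
        {lam \<in> partitions_of (int n). has_fixed_hook h k lam}"
  proof (intro equalityI subsetI)
    fix lam assume "lam \<in> (\<lambda>(A, B). A @ k # B) ` hook_splits h k n"
    then obtain A B where lam: "lam = A @ k # B" and AB: "(A, B) \<in> hook_splits h k n"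
      by auto
    then have "has_fixed_hook h k lam"
      unfolding has_fixed_hook_iff_append_Cons hook_splits_def by blast
    moreover have "is_partition lam" "sum_list lam = n"
      using assms AB by (simp_all add: lam hook_splits_def is_partition_append_Cons)
    ultimately show "lam \<in> {lam \<in> partitions_of (int n). has_fixed_hook h k lam}"
      by (simp add: partitions_of_def)
  next
    fix lam assume "lam \<in> {lam \<in> partitions_of (int n). has_fixed_hook h k lam}"
    then obtain A B where lam: "lam = A @ k # B" and
      "int k + int (length B) = int (length A) + 1 + h" "is_partition lam" "sum_list lam = n"
      unfolding partitions_of_def has_fixed_hook_iff_append_Cons by auto
    with assms have "(A, B) \<in> hook_splits h k n"
      by (simp add: hook_splits_def is_partition_append_Cons)
    with lam show "lam \<in> (\<lambda>(A, B). A @ k # B) ` hook_splits h k n"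
      by force
  qed
qed

definition shift_split :: "nat list \<times> nat list \<Rightarrow> nat list \<times> nat list" where
  "shift_split = (\<lambda>(A, B). (map Suc A, remove_first_column B))"

definition unshift_split :: "int \<Rightarrow> nat \<Rightarrow> nat list \<times> nat list \<Rightarrow> nat list \<times> nat list" where
  "unshift_split h k = (\<lambda>(C, D). (map (\<lambda>c. c - 1) C,
     add_first_column (nat (int (length C) + 1 + h - int k)) D))"

lemma shift_split_in_shifted_splits:
  assumes "(A, B) \<in> hook_splits h k n"
  shows "unshift_split h k (shift_split (A, B)) = (A, B)"
    and "shift_split (A, B) \<in> shifted_splits h k n"
proof -
  from assms have AB: "is_partition A" "is_partition B" "\<forall>a\<in>set A. k \<le> a" "\<forall>b\<in>set B. b \<le> k"
    "int k + int (length B) = int (length A) + 1 + h" "sum_list A + k + sum_list B = n"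
    by (auto simp: hook_splits_def)
  then have "nat (int (length A) + 1 + h - int k) = length B"
    by linarith
  with AB(2) show "unshift_split h k (shift_split (A, B)) = (A, B)"
    by (simp add: shift_split_def unshift_split_def comp_def add_first_column_remove_first_column)
  from AB sum_list_Suc[of "\<lambda>a. a" A] sum_list_remove_first_column[of B]
    length_remove_first_column_le[of B]
  show "shift_split (A, B) \<in> shifted_splits h k n"
    by (auto simp: shift_split_def shifted_splits_def is_partition_map_Suc is_partition_def[of A]
        is_partition_remove_first_column remove_first_column_less)
qed

lemma unshift_split_in_hook_splits:
  assumes "0 < k" "(C, D) \<in> shifted_splits h k n"
  shows "shift_split (unshift_split h k (C, D)) = (C, D)"
    and "unshift_split h k (C, D) \<in> hook_splits h k n"
proof -
  from assms(2) have CD: "is_partition C" "is_partition D" "\<forall>c\<in>set C. k < c" "\<forall>d\<in>set D. d < k"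
    "int k + int (length D) \<le> int (length C) + 1 + h"
    "int (sum_list C + sum_list D) + h + 1 = int n"
    by (auto simp: shifted_splits_def)
  then show "shift_split (unshift_split h k (C, D)) = (C, D)"
    by (auto simp: shift_split_def unshift_split_def comp_def remove_first_column_add_first_column
        intro!: map_idI)
  define L where "L = nat (int (length C) + 1 + h - int k)"
  have "length D \<le> L" and L: "int k + int L = int (length C) + 1 + h"
    using CD(5) by (simp_all add: L_def)
  have C_gt_1: "\<forall>c\<in>set C. 1 < c"
    using assms(1) CD(3) by auto
  have "is_partition (map (\<lambda>c. c - 1) C)"
    using CD(1) C_gt_1 by (rule is_partition_map_pred)
  moreover have "sum_list (map (\<lambda>c. c - 1) C) + length C = sum_list C"
    by (rule sum_list_map_pred) (use C_gt_1 in auto)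
  ultimately show "unshift_split h k (C, D) \<in> hook_splits h k n"
    using \<open>length D \<le> L\<close> L assms(1) CD
    by (auto simp: unshift_split_def hook_splits_def L_def[symmetric] length_add_first_column
        sum_list_add_first_column is_partition_add_first_column add_first_column_le)
qed

lemma bij_betw_shift_split:
  "0 < k \<Longrightarrow> bij_betw shift_split (hook_splits h k n) (shifted_splits h k n)"
  using shift_split_in_shifted_splits unshift_split_in_hook_splits
  by (intro bij_betw_byWitness[where f' = "unshift_split h k"]) auto

lemma mset_upt_subseteq_filter_less:
  assumes "{1..<k} \<subseteq> set mu"
  shows "mset [1..<k] \<subseteq># mset (filter (\<lambda>p. p < k) mu)"
proof -
  have "mset_set {1..<k} \<subseteq># mset_set (set (filter (\<lambda>p. p < k) mu))"
    using assms by (intro subset_imp_msubset_mset_set) auto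
  also have "\<dots> \<subseteq># mset (filter (\<lambda>p. p < k) mu)"
    using mset_set_set_mset_msubset[of "mset (filter (\<lambda>p. p < k) mu)"] by simp
  finally show ?thesis by simp
qed

lemma mset_split_at_mex:
  assumes "0 < k" "mex mu = k"
  shows "mset mu = mset (filter (\<lambda>p. k < p) mu)
                    + (mset (filter (\<lambda>p. p < k) mu) - mset [1..<k]) + mset [1..<k]"
proof -
  have "k \<notin> set mu" "{1..<k} \<subseteq> set mu"
    using assms mex_eq_iff by auto
  have "filter (\<lambda>p. p < k) mu = filter (\<lambda>p. \<not> k < p) mu"
  proof (rule filter_cong[OF refl])
    fix p assume "p \<in> set mu"
    with \<open>k \<notin> set mu\<close> have "p \<noteq> k" by blast
    then show "p < k \<longleftrightarrow> \<not> k < p" by auto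
  qed
  then have "mset mu = mset (filter (\<lambda>p. k < p) mu) + mset (filter (\<lambda>p. p < k) mu)"
    using multiset_partition[of "mset mu" "\<lambda>p. k < p"] by simp
  with mset_upt_subseteq_filter_less[OF \<open>{1..<k} \<subseteq> set mu\<close>] show ?thesis
    by (simp only: add.assoc subset_mset.diff_add)
qed

definition mex_partitions :: "int \<Rightarrow> nat \<Rightarrow> nat \<Rightarrow> nat list set" where
  "mex_partitions h k n = {mu \<in> partitions_of (int n + int (k choose 2) - (h + 1)). mex mu = k \<and>
     h + 1 + int (length (filter (\<lambda>p. p > k) mu)) > int (length (filter (\<lambda>p. p < k) mu))}"

definition merge_split :: "nat \<Rightarrow> nat list \<times> nat list \<Rightarrow> nat list" where
  "merge_split k = (\<lambda>(C, D). rev (sort (C @ D @ [1..<k])))"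

definition unmerge_split :: "nat \<Rightarrow> nat list \<Rightarrow> nat list \<times> nat list" where
  "unmerge_split k mu = (filter (\<lambda>p. k < p) mu,
     rev (sorted_list_of_multiset (mset (filter (\<lambda>p. p < k) mu) - mset [1..<k])))"

lemma merge_split_in_mex_partitions:
  assumes "0 < k" "(C, D) \<in> shifted_splits h k n"
  shows "unmerge_split k (merge_split k (C, D)) = (C, D)"
    and "merge_split k (C, D) \<in> mex_partitions h k n"
proof -
  from assms(2) have CD: "is_partition C" "is_partition D" "\<forall>c\<in>set C. k < c" "\<forall>d\<in>set D. d < k"
    "int k + int (length D) \<le> int (length C) + 1 + h"
    "int (sum_list C + sum_list D) + h + 1 = int n"
    by (auto simp: shifted_splits_def)
  define mu where "mu = merge_split k (C, D)"
  have mset_mu: "mset mu = mset (C @ D @ [1..<k])"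
    by (simp add: mu_def merge_split_def)
  then have mset_filter_mu: "mset (filter P mu) = mset (filter P (C @ D @ [1..<k]))" for P
    by simp
  have sorted_mu: "sorted_wrt (\<ge>) mu"
    by (simp add: mu_def merge_split_def sorted_wrt_rev)
  have filter_greater: "filter (\<lambda>p. k < p) (C @ D @ [1..<k]) = C"
    and filter_less: "filter (\<lambda>p. p < k) (C @ D @ [1..<k]) = D @ [1..<k]"
    using CD(3,4) by (auto simp: filter_id_conv filter_empty_conv)
  have "filter (\<lambda>p. k < p) mu = C"
  proof (rule sorted_wrt_ge_mset_eq)
    show "sorted_wrt (\<ge>) (filter (\<lambda>p. k < p) mu)"
      using sorted_mu by (rule sorted_wrt_filter)
    show "sorted_wrt (\<ge>) C"
      using CD(1) by (simp add: is_partition_def)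
    show "mset (filter (\<lambda>p. k < p) mu) = mset C"
      using mset_filter_mu filter_greater by metis
  qed
  moreover have "mset (filter (\<lambda>p. p < k) mu) = mset D + mset [1..<k]"
    using mset_filter_mu[of "\<lambda>p. p < k"] by (simp only: filter_less mset_append)
  moreover have "rev (sort D) = D"
    using CD(2) by (intro sorted_wrt_ge_mset_eq) (simp_all add: is_partition_def sorted_wrt_rev)
  ultimately show "unmerge_split k (merge_split k (C, D)) = (C, D)"
    by (simp add: unmerge_split_def mu_def)
  have "set mu = set C \<union> set D \<union> {1..<k}"
    using mset_eq_setD[OF mset_mu] by auto
  with assms(1) CD(1-4) sorted_mu have "is_partition mu" "mex mu = k"
    by (auto simp: is_partition_def mex_eq_iff)
  moreover have "sum_list mu = sum_list (C @ D @ [1..<k])"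
    using mset_mu by (metis sum_mset_sum_list)
  then have "int (sum_list mu) = int n + int (k choose 2) - (h + 1)"
    using CD(6) sum_list_upt_1_eq_choose_2[of k] by simp
  moreover have length_filter_mu: "length (filter P mu) = length (filter P (C @ D @ [1..<k]))" for P
    using mset_filter_mu[of P] by (metis size_mset)
  then have "length (filter (\<lambda>p. p > k) mu) = length C"
    and "length (filter (\<lambda>p. p < k) mu) = length D + (k - 1)"
    by (simp_all only: length_filter_mu filter_greater filter_less length_append length_upt)
  ultimately show "merge_split k (C, D) \<in> mex_partitions h k n"
    using assms(1) CD(5)
    by (simp add: mu_def[symmetric] mex_partitions_def partitions_of_def of_nat_diff)
qed

lemma size_filter_less_diff_upt:
  assumes "0 < k" "mex mu = k"
  shows "size (mset (filter (\<lambda>p. p < k) mu) - mset [1..<k]) + (k - 1)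
           = length (filter (\<lambda>p. p < k) mu)"
proof -
  have sub: "mset [1..<k] \<subseteq># mset (filter (\<lambda>p. p < k) mu)"
    using assms mex_eq_iff by (intro mset_upt_subseteq_filter_less) blast
  then show ?thesis
    using size_Diff_submset[OF sub] size_mset_mono[OF sub] by (simp del: mset_filter mset_upt)
qed

lemma unmerge_split_in_shifted_splits:
  assumes "0 < k" "mu \<in> mex_partitions h k n"
  shows "merge_split k (unmerge_split k mu) = mu"
    and "unmerge_split k mu \<in> shifted_splits h k n"
proof -
  from assms(2) have mu: "is_partition mu" "mex mu = k"
    "int (sum_list mu) = int n + int (k choose 2) - (h + 1)"
    "h + 1 + int (length (filter (\<lambda>p. p > k) mu)) > int (length (filter (\<lambda>p. p < k) mu))"
    by (auto simp: mex_partitions_def partitions_of_def)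
  define C where "C = filter (\<lambda>p. k < p) mu"
  define M where "M = mset (filter (\<lambda>p. p < k) mu) - mset [1..<k]"
  define D where "D = rev (sorted_list_of_multiset M)"
  have unmerge_mu: "unmerge_split k mu = (C, D)"
    by (simp add: unmerge_split_def C_def D_def M_def)
  have mset_D: "mset D = M"
    by (simp add: D_def)
  have mset_mu: "mset mu = mset C + mset D + mset [1..<k]"
    using mset_split_at_mex[OF assms(1) mu(2)] by (simp add: C_def mset_D M_def)
  show "merge_split k (unmerge_split k mu) = mu"
  proof (simp only: unmerge_mu merge_split_def prod.case, rule sorted_wrt_ge_mset_eq)
    show "sorted_wrt (\<ge>) (rev (sort (C @ D @ [1..<k])))"
      by (simp add: sorted_wrt_rev)
    show "sorted_wrt (\<ge>) mu"
      using mu(1) by (simp add: is_partition_def)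
    show "mset (rev (sort (C @ D @ [1..<k]))) = mset mu"
      by (simp add: mset_mu)
  qed
  have "set D \<subseteq> set (filter (\<lambda>p. p < k) mu)"
    by (auto simp: D_def M_def dest: in_diffD)
  with mu(1) have "is_partition C" "is_partition D" "\<forall>c\<in>set C. k < c" "\<forall>d\<in>set D. d < k"
    by (auto simp: C_def D_def is_partition_def sorted_wrt_filter sorted_wrt_rev)
  moreover have "length D + (k - 1) = length (filter (\<lambda>p. p < k) mu)"
    using size_filter_less_diff_upt[OF assms(1) mu(2)] by (metis M_def mset_D size_mset)
  moreover have "sum_list C + sum_list D + (k choose 2) = sum_list mu"
    using arg_cong[OF mset_mu, of sum_mset]
    by (simp only: sum_mset.union sum_mset_sum_list sum_list_upt_1_eq_choose_2)
  ultimately show "unmerge_split k mu \<in> shifted_splits h k n"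
    using assms(1) mu(3,4) unfolding unmerge_mu C_def[symmetric]
    by (auto simp: shifted_splits_def)
qed

lemma bij_betw_merge_split:
  "0 < k \<Longrightarrow> bij_betw (merge_split k) (shifted_splits h k n) (mex_partitions h k n)"
  using merge_split_in_mex_partitions unmerge_split_in_shifted_splits
  by (intro bij_betw_byWitness[where f' = "unmerge_split k"]) auto

theorem theorem3p4:
  fixes h :: int and k n :: nat
  assumes "k \<ge> 1"
  shows "card {lam \<in> partitions_of (int n). has_fixed_hook h k lam}
       = card {mu \<in> partitions_of (int n + int (k choose 2) - (h + 1)).
                 mex mu = k \<and>
                 h + 1 + int (length (filter (\<lambda>p. p > k) mu))
                   > int (length (filter (\<lambda>p. p < k) mu))}"
proof -
  from assms have "0 < k" by simp
  have "card {lam \<in> partitions_of (int n). has_fixed_hook h k lam} = card (hook_splits h k n)"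
    using bij_betw_same_card[OF bij_betw_hook_splits[OF \<open>0 < k\<close>]] by (rule sym)
  also have "\<dots> = card (shifted_splits h k n)"
    using bij_betw_same_card[OF bij_betw_shift_split[OF \<open>0 < k\<close>]] .
  also have "\<dots> = card (mex_partitions h k n)"
    using bij_betw_same_card[OF bij_betw_merge_split[OF \<open>0 < k\<close>]] .
  finally show ?thesis
    by (simp only: mex_partitions_def)
qed

end
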